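(* Let $\tau$ be a primitive, aperiodic substitution and let $g_1,g_2$ be generators for $\tau$. Then $g_1^*\sim_o g_2^*$ if and only if $g_1\sim_G g_2$.
   Context: Let $\mathcal{A}$ be a finite nonempty alphabet, $\mathcal{A}^*$ the finite words over $\mathcal{A}$ (including the empty word), $\mathcal{A}^+$ the nonempty words, $|u|$ the length of $u$. A word $u$ is a factor of $v$ if $v=w_1uw_2$ for some words $w_1,w_2$. A substitution is a map $\tau:\mathcal{A}\to\mathcal{A}^+$ extended to a concatenation-respecting map on words and letterwise to sequences. For $x\in\mathcal{A}^{\mathbb{Z}}$, $x_{[i]}$ denotes the letter at index $i$ and $x_{[i,j]}$ the word $x_{[i]}\cdots x_{[j]}$. The language $\mathcal{L}(\tau)$ is the set of words that are factors of $\tau^n(a)$ for some letter $a$ and some $n\ge1$; $X_\tau=\{x\in\mathcal{A}^{\mathbb{Z}}: x_{[i,j]}\in\mathcal{L}(\tau)\ \forall i\le j\}$. $\tau$ is primitive if there is $n\ge1$ such that every letter $b$ is a factor of $\tau^n(a)$ for every letter $a$, and there is a letter $a$ such that for every $N$ there is $n$ with $|\tau^n(a)|>N$; a primitive $\tau$ is aperiodic if $X_\tau$ is infinite. A generator for $\tau$ is a triple $(v,u,w)$ with $v,u,w\in\mathcal{A}^+$, $u\in\mathcal{L}(\tau)$ and $\tau(u)=vuw$; $v$, $u$, $w$ are its left wing, center and right wing, and its length is $|u|$. Its completion $(v,u,w)^*\in X_\tau$ is the two-sided sequence $\cdots\tau^2(v)\tau(v)vu.w\tau(w)\tau^2(w)\cdots$,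 i.e. the left-infinite word $\cdots\tau^2(v)\tau(v)vu$ occupies the negative indices, ending at index $-1$, and the right-infinite word $w\tau(w)\tau^2(w)\cdots$ occupies the indices $\ge0$, starting at index $0$. If $(v,u,cw)$ is a generator with $c\in\mathcal{A}$, $w\in\mathcal{A}^*$, its right extension is the generator $(v,uc,w\tau(c))$; if $(vc,u,w)$ is a generator with $c\in\mathcal{A}$, $v\in\mathcal{A}^*$, its left extension is the generator $(\tau(c)v,cu,w)$. Two generators $g_1,g_2$ are G related ($g_1\sim_G g_2$) if there is a generator $g_3$ obtainable from $g_1$ and also from $g_2$ by finite (possibly empty) sequences of left and right extensions. For $x,y\in X_\tau$, $x\sim_o y$ (orbit equivalence) means there is $m\in\mathbb{Z}$ with $x_{[i]}=y_{[i+m]}$ for all $i\in\mathbb{Z}$. *)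

theory Defs
  imports Main
begin

definition substitution :: "('a \<Rightarrow> 'a list) \<Rightarrow> bool" where
  "substitution \<tau> \<longleftrightarrow> (\<forall>a. \<tau> a \<noteq> [])"

definition subst_word :: "('a \<Rightarrow> 'a list) \<Rightarrow> 'a list \<Rightarrow> 'a list" where
  "subst_word \<tau> w = concat (map \<tau> w)"

definition is_factor :: "'a list \<Rightarrow> 'a list \<Rightarrow> bool" where
  "is_factor u v \<longleftrightarrow> (\<exists>w1 w2. v = w1 @ u @ w2)"

definition language :: "('a \<Rightarrow> 'a list) \<Rightarrow> 'a list set" where
  "language \<tau> = {u. \<exists>a n. n \<ge> 1 \<and> is_factor u ((subst_word \<tau> ^^ n) [a])}"

definition seg :: "(int \<Rightarrow> 'a) \<Rightarrow> int \<Rightarrow> int \<Rightarrow> 'a list" where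
  "seg x i j = map x [i..j]"

definition shift_space :: "('a \<Rightarrow> 'a list) \<Rightarrow> (int \<Rightarrow> 'a) set" where
  "shift_space \<tau> = {x. \<forall>i j. i \<le> j \<longrightarrow> seg x i j \<in> language \<tau>}"

definition primitive :: "('a \<Rightarrow> 'a list) \<Rightarrow> bool" where
  "primitive \<tau> \<longleftrightarrow>
     (\<exists>n\<ge>1. \<forall>a b. b \<in> set ((subst_word \<tau> ^^ n) [a])) \<and>
     (\<exists>a. \<forall>N. \<exists>n. length ((subst_word \<tau> ^^ n) [a]) > N)"

definition aperiodic :: "('a \<Rightarrow> 'a list) \<Rightarrow> bool" where
  "aperiodic \<tau> \<longleftrightarrow> primitive \<tau> \<and> infinite (shift_space \<tau>)"

definition generator :: "('a \<Rightarrow> 'a list) \<Rightarrow> 'a list \<times> 'a list \<times> 'a list \<Rightarrow> bool" where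
  "generator \<tau> g \<longleftrightarrow> (case g of (v, u, w) \<Rightarrow>
     v \<noteq> [] \<and> u \<noteq> [] \<and> w \<noteq> [] \<and> u \<in> language \<tau> \<and> subst_word \<tau> u = v @ u @ w)"

text \<open>Finite prefixes of w \<tau>(w) \<tau>^2(w) ... and finite suffixes
  (ending with u) of ... \<tau>^2(v) \<tau>(v) v u.\<close>
definition right_word :: "('a \<Rightarrow> 'a list) \<Rightarrow> 'a list \<Rightarrow> nat \<Rightarrow> 'a list" where
  "right_word \<tau> w n = concat (map (\<lambda>i. (subst_word \<tau> ^^ i) w) [0..<n])"

definition left_word :: "('a \<Rightarrow> 'a list) \<Rightarrow> 'a list \<Rightarrow> 'a list \<Rightarrow> nat \<Rightarrow> 'a list" where
  "left_word \<tau> v u n = concat (map (\<lambda>i. (subst_word \<tau> ^^ i) v) (rev [0..<n])) @ u"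

text \<open>Completion: index i \<ge> 0 is the i-th letter (from 0) of w \<tau>(w) ...;
  index -m (m \<ge> 1) is the m-th letter from the right end of ... \<tau>(v) v u.\<close>
definition completion :: "('a \<Rightarrow> 'a list) \<Rightarrow> 'a list \<times> 'a list \<times> 'a list \<Rightarrow> int \<Rightarrow> 'a" where
  "completion \<tau> g = (case g of (v, u, w) \<Rightarrow> (\<lambda>i.
     if i \<ge> 0 then right_word \<tau> w (Suc (nat i)) ! nat i
     else rev (left_word \<tau> v u (nat (- i))) ! (nat (- i) - 1)))"

definition right_ext :: "('a \<Rightarrow> 'a list) \<Rightarrow> 'a list \<times> 'a list \<times> 'a list \<Rightarrow> 'a list \<times> 'a list \<times> 'a list \<Rightarrow> bool" where
  "right_ext \<tau> g g' \<longleftrightarrow> generator \<tau> g \<and>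
     (\<exists>v u c w. g = (v, u, c # w) \<and> g' = (v, u @ [c], w @ \<tau> c))"

definition left_ext :: "('a \<Rightarrow> 'a list) \<Rightarrow> 'a list \<times> 'a list \<times> 'a list \<Rightarrow> 'a list \<times> 'a list \<times> 'a list \<Rightarrow> bool" where
  "left_ext \<tau> g g' \<longleftrightarrow> generator \<tau> g \<and>
     (\<exists>v u c w. g = (v @ [c], u, w) \<and> g' = (\<tau> c @ v, c # u, w))"

definition G_related :: "('a \<Rightarrow> 'a list) \<Rightarrow> 'a list \<times> 'a list \<times> 'a list \<Rightarrow> 'a list \<times> 'a list \<times> 'a list \<Rightarrow> bool" where
  "G_related \<tau> g1 g2 \<longleftrightarrow> (\<exists>g3.
     (\<lambda>g g'. left_ext \<tau> g g' \<or> right_ext \<tau> g g')\<^sup>*\<^sup>* g1 g3 \<and>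
     (\<lambda>g g'. left_ext \<tau> g g' \<or> right_ext \<tau> g g')\<^sup>*\<^sup>* g2 g3)"

definition orbit_equiv :: "(int \<Rightarrow> 'a) \<Rightarrow> (int \<Rightarrow> 'a) \<Rightarrow> bool" where
  "orbit_equiv x y \<longleftrightarrow> (\<exists>m::int. \<forall>i. x i = y (i + m))"

end

theory Submission
  imports Defs
begin

(* A left extension leaves the completion unchanged and a right extension shifts it by one
  place, so G-related generators have orbit-equivalent completions.

  Conversely, right extensions reduce a shift between the completions to equality, and left
  extensions make both centers equally long; the centers are then equal, since the center is
  read off the completion just left of the origin. If the right wings w1, w2 had different
  lengths, the right half r of the common completion would satisfy r = w1 \<tau>(r) = w2 \<tau>(r),
  so r would be eventually periodic with period |w1| - |w2|. By primitivity every word of the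
  language occurs in r, so every point of the shift space would be periodic with that period,
  and the shift space would be finite, contradicting aperiodicity. Hence the right wings agree,
  and the left wings are then determined by \<tau>(u) = v u w. *)

lemma subst_word_Nil [simp]: "subst_word \<tau> [] = []"
  by (simp add: subst_word_def)

lemma subst_word_Cons: "subst_word \<tau> (c # w) = \<tau> c @ subst_word \<tau> w"
  by (simp add: subst_word_def)

lemma subst_word_single [simp]: "subst_word \<tau> [c] = \<tau> c"
  by (simp add: subst_word_def)

lemma subst_word_append [simp]: "subst_word \<tau> (a @ b) = subst_word \<tau> a @ subst_word \<tau> b"
  by (simp add: subst_word_def)

lemma subst_word_power_append [simp]:
  "(subst_word \<tau> ^^ n) (a @ b) = (subst_word \<tau> ^^ n) a @ (subst_word \<tau> ^^ n) b"
  by (induction n) auto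

lemma subst_word_power_Suc_single: "(subst_word \<tau> ^^ n) (\<tau> c) = (subst_word \<tau> ^^ Suc n) [c]"
  by (simp add: funpow_Suc_right del: funpow.simps)

lemma length_subst_word_ge: "substitution \<tau> \<Longrightarrow> length w \<le> length (subst_word \<tau> w)"
proof (induction w)
  case (Cons c w)
  then have "\<tau> c \<noteq> []" by (simp add: substitution_def)
  with Cons show ?case by (cases "\<tau> c") (simp_all add: subst_word_Cons)
qed simp

lemma length_subst_word_power_ge:
  "substitution \<tau> \<Longrightarrow> length w \<le> length ((subst_word \<tau> ^^ n) w)"
  by (induction n) (auto intro: le_trans length_subst_word_ge)

lemma right_word_0 [simp]: "right_word \<tau> w 0 = []"
  by (simp add: right_word_def)

lemma right_word_Suc: "right_word \<tau> w (Suc n) = right_word \<tau> w n @ (subst_word \<tau> ^^ n) w"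
  by (simp add: right_word_def)

lemma right_word_Suc_subst_word: "right_word \<tau> w (Suc n) = w @ subst_word \<tau> (right_word \<tau> w n)"
proof (induction n)
  case (Suc n)
  show ?case by (subst right_word_Suc, subst Suc) (simp add: right_word_Suc)
qed (simp add: right_word_Suc)

lemma length_right_word_ge:
  assumes "substitution \<tau>" "w \<noteq> []"
  shows "n \<le> length (right_word \<tau> w n)"
proof (induction n)
  case (Suc n)
  have "1 \<le> length w" using assms(2) by (cases w) auto
  also have "\<dots> \<le> length ((subst_word \<tau> ^^ n) w)" using length_subst_word_power_ge[OF assms(1)] .
  finally show ?case using Suc by (simp add: right_word_Suc)
qed simp

lemma right_word_prefix: "n \<le> m \<Longrightarrow> \<exists>s. right_word \<tau> w m = right_word \<tau> w n @ s"
  by (induction m rule: dec_induct) (auto simp: right_word_Suc)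

lemma left_word_0 [simp]: "left_word \<tau> v u 0 = u"
  by (simp add: left_word_def)

lemma left_word_Suc: "left_word \<tau> v u (Suc n) = (subst_word \<tau> ^^ n) v @ left_word \<tau> v u n"
  by (simp add: left_word_def)

lemma left_word_snoc: "left_word \<tau> v (u @ [c]) n = left_word \<tau> v u n @ [c]"
  by (simp add: left_word_def)

lemma length_left_word_ge:
  assumes "substitution \<tau>" "v \<noteq> []"
  shows "n + length u \<le> length (left_word \<tau> v u n)"
proof (induction n)
  case (Suc n)
  have "1 \<le> length v" using assms(2) by (cases v) auto
  also have "\<dots> \<le> length ((subst_word \<tau> ^^ n) v)" using length_subst_word_power_ge[OF assms(1)] .
  finally show ?case using Suc by (simp add: left_word_Suc)
qed simp

lemma rev_left_word_prefix: "n \<le> m \<Longrightarrow> \<exists>s. rev (left_word \<tau> v u m) = rev (left_word \<tau> v u n) @ s"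
  by (induction m rule: dec_induct) (auto simp: left_word_Suc)

lemma completion_right_word_nth:
  assumes "substitution \<tau>" "w \<noteq> []" "j < length (right_word \<tau> w n)"
  shows "completion \<tau> (v, u, w) (int j) = right_word \<tau> w n ! j"
proof -
  define m where "m = max n (Suc j)"
  obtain s1 where s1: "right_word \<tau> w m = right_word \<tau> w (Suc j) @ s1"
    using right_word_prefix[of "Suc j" m] m_def by auto
  obtain s2 where s2: "right_word \<tau> w m = right_word \<tau> w n @ s2"
    using right_word_prefix[of n m] m_def by auto
  have "j < length (right_word \<tau> w (Suc j))"
    using length_right_word_ge[OF assms(1,2), of "Suc j"] by simp
  then have "completion \<tau> (v, u, w) (int j) = right_word \<tau> w m ! j"
    using s1 by (simp add: completion_def nth_append)
  also have "\<dots> = right_word \<tau> w n ! j" using s2 assms(3) by (simp add: nth_append)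
  finally show ?thesis .
qed

lemma completion_left_word_nth:
  assumes "substitution \<tau>" "v \<noteq> []" "k < length (left_word \<tau> v u n)"
  shows "completion \<tau> (v, u, w) (- int k - 1) = rev (left_word \<tau> v u n) ! k"
proof -
  define m where "m = max n (Suc k)"
  obtain s1 where s1: "rev (left_word \<tau> v u m) = rev (left_word \<tau> v u (Suc k)) @ s1"
    using rev_left_word_prefix[of "Suc k" m \<tau> v u] m_def by auto
  obtain s2 where s2: "rev (left_word \<tau> v u m) = rev (left_word \<tau> v u n) @ s2"
    using rev_left_word_prefix[of n m \<tau> v u] m_def by auto
  have "nat (1 + int k) = Suc k" by simp
  moreover have "k < length (left_word \<tau> v u (Suc k))"
    using length_left_word_ge[OF assms(1,2), of "Suc k" u] by simp
  ultimately have "completion \<tau> (v, u, w) (- int k - 1) = rev (left_word \<tau> v u m) ! k"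
    using s1 by (simp add: completion_def nth_append)
  also have "\<dots> = rev (left_word \<tau> v u n) ! k" using s2 assms(3) by (simp add: nth_append)
  finally show ?thesis .
qed

lemma completion_center_nth:
  assumes "substitution \<tau>" "generator \<tau> (v, u, w)" "k < length u"
  shows "completion \<tau> (v, u, w) (- int k - 1) = rev u ! k"
  using assms completion_left_word_nth[of \<tau> v k u 0 w] by (simp add: generator_def)

lemma completion_right_wing_nth:
  assumes "substitution \<tau>" "generator \<tau> (v, u, w)" "j < length w"
  shows "completion \<tau> (v, u, w) (int j) = w ! j"
  using assms completion_right_word_nth[of \<tau> w j 1 v u] right_word_Suc_subst_word[of \<tau> w 0]
  by (simp add: generator_def)

lemma is_factor_trans:
  assumes "is_factor a b" "is_factor b c"
  shows "is_factor a c"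
proof -
  obtain p q r t where "b = p @ a @ q" "c = r @ b @ t"
    using assms unfolding is_factor_def by blast
  then show ?thesis unfolding is_factor_def by (intro exI[of _ "r @ p"] exI[of _ "q @ t"]) simp
qed

lemma is_factor_subst_word:
  assumes "is_factor a b"
  shows "is_factor (subst_word \<tau> a) (subst_word \<tau> b)"
proof -
  obtain p q where "b = p @ a @ q" using assms unfolding is_factor_def by blast
  then show ?thesis
    unfolding is_factor_def by (intro exI[of _ "subst_word \<tau> p"] exI[of _ "subst_word \<tau> q"]) simp
qed

lemma language_factor_closed: "is_factor s u \<Longrightarrow> u \<in> language \<tau> \<Longrightarrow> s \<in> language \<tau>"
  unfolding language_def using is_factor_trans by blast

lemma language_subst_word_closed:
  assumes "u \<in> language \<tau>"
  shows "subst_word \<tau> u \<in> language \<tau>"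
proof -
  obtain a n where "n \<ge> 1" "is_factor u ((subst_word \<tau> ^^ n) [a])"
    using assms unfolding language_def by blast
  then have "Suc n \<ge> 1" "is_factor (subst_word \<tau> u) ((subst_word \<tau> ^^ Suc n) [a])"
    using is_factor_subst_word by auto
  then show ?thesis unfolding language_def by blast
qed

lemma generator_right_ext:
  assumes "substitution \<tau>" "generator \<tau> (v, u, c # w)"
  shows "generator \<tau> (v, u @ [c], w @ \<tau> c)"
proof -
  have g: "v \<noteq> []" "u \<noteq> []" "u \<in> language \<tau>" "subst_word \<tau> u = v @ u @ c # w"
    using assms(2) by (auto simp: generator_def)
  then have "is_factor (u @ [c]) (subst_word \<tau> u)"
    unfolding is_factor_def by (intro exI[of _ v] exI[of _ w]) simp
  then have "u @ [c] \<in> language \<tau>"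
    using language_factor_closed language_subst_word_closed g(3) by blast
  moreover have "\<tau> c \<noteq> []" using assms(1) by (simp add: substitution_def)
  ultimately show ?thesis using g by (simp add: generator_def)
qed

lemma generator_left_ext:
  assumes "substitution \<tau>" "generator \<tau> (v @ [c], u, w)"
  shows "generator \<tau> (\<tau> c @ v, c # u, w)"
proof -
  have g: "w \<noteq> []" "u \<noteq> []" "u \<in> language \<tau>" "subst_word \<tau> u = v @ c # u @ w"
    using assms(2) by (auto simp: generator_def)
  then have "is_factor (c # u) (subst_word \<tau> u)"
    unfolding is_factor_def by (intro exI[of _ v] exI[of _ w]) simp
  then have "c # u \<in> language \<tau>"
    using language_factor_closed language_subst_word_closed g(3) by blast
  moreover have "\<tau> c \<noteq> []" using assms(1) by (simp add: substitution_def)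
  ultimately show ?thesis using g by (simp add: generator_def subst_word_Cons)
qed

lemma right_word_right_ext:
  "c # right_word \<tau> (w @ \<tau> c) n = right_word \<tau> (c # w) n @ (subst_word \<tau> ^^ n) [c]"
proof (induction n)
  case (Suc n)
  have "(subst_word \<tau> ^^ n) (c # w) = (subst_word \<tau> ^^ n) [c] @ (subst_word \<tau> ^^ n) w"
    using subst_word_power_append[of n \<tau> "[c]" w] by simp
  with Suc show ?case by (simp add: right_word_Suc subst_word_power_Suc_single)
qed simp

lemma left_word_left_ext:
  "left_word \<tau> (\<tau> c @ v) (c # u) n = (subst_word \<tau> ^^ n) [c] @ left_word \<tau> (v @ [c]) u n"
  by (induction n) (simp_all add: left_word_Suc subst_word_power_Suc_single del: funpow.simps)

lemma completion_right_ext_nonneg: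
  assumes "substitution \<tau>"
  shows "completion \<tau> (v, u @ [c], w @ \<tau> c) (int j) = completion \<tau> (v, u, c # w) (int (Suc j))"
proof -
  let ?N = "Suc (Suc j)"
  have "\<tau> c \<noteq> []" using assms by (simp add: substitution_def)
  then have "j < length (right_word \<tau> (w @ \<tau> c) ?N)"
    using length_right_word_ge[OF assms, of "w @ \<tau> c" ?N] by simp
  then have "completion \<tau> (v, u @ [c], w @ \<tau> c) (int j) = (c # right_word \<tau> (w @ \<tau> c) ?N) ! Suc j"
    using completion_right_word_nth[OF assms] \<open>\<tau> c \<noteq> []\<close> by simp
  also have "\<dots> = right_word \<tau> (c # w) ?N ! Suc j"
    using length_right_word_ge[OF assms, of "c # w" ?N]
    by (simp add: right_word_right_ext nth_append)
  also have "\<dots> = completion \<tau> (v, u, c # w) (int (Suc j))"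
    using completion_right_word_nth[OF assms, of "c # w" "Suc j" ?N v u]
      length_right_word_ge[OF assms, of "c # w" ?N]
    by simp
  finally show ?thesis .
qed

lemma completion_right_ext:
  assumes "substitution \<tau>" "v \<noteq> []"
  shows "completion \<tau> (v, u @ [c], w @ \<tau> c) i = completion \<tau> (v, u, c # w) (i + 1)"
proof -
  have minus_one: "completion \<tau> (v, u @ [c], w @ \<tau> c) (- 1) = completion \<tau> (v, u, c # w) 0"
    using completion_left_word_nth[OF assms, of 0 "u @ [c]" 0]
      completion_right_word_nth[OF assms(1), of "c # w" 0 1]
    by (simp add: right_word_Suc)
  have neg: "completion \<tau> (v, u @ [c], w @ \<tau> c) (- int (Suc k) - 1) =
      completion \<tau> (v, u, c # w) (- int k - 1)" for k
    using completion_left_word_nth[OF assms, of "Suc k" "u @ [c]" "Suc (Suc k)" "w @ \<tau> c"]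
      completion_left_word_nth[OF assms, of k u "Suc (Suc k)" "c # w"]
      length_left_word_ge[OF assms, of "Suc (Suc k)" u]
    by (simp add: left_word_snoc)
  show ?thesis
  proof (cases "i \<ge> -1")
    case True
    then consider "i = -1" | "i \<ge> 0" by linarith
    then show ?thesis
      using completion_right_ext_nonneg[OF assms(1), of v u c w "nat i"] minus_one
      by cases (auto simp: add.commute)
  next
    case False
    then have "i = - int (Suc (nat (- i - 2))) - 1" "i + 1 = - int (nat (- i - 2)) - 1" by auto
    then show ?thesis using neg[of "nat (- i - 2)"] by metis
  qed
qed

lemma completion_left_ext:
  assumes "substitution \<tau>"
  shows "completion \<tau> (\<tau> c @ v, c # u, w) = completion \<tau> (v @ [c], u, w)"
proof
  fix i
  show "completion \<tau> (\<tau> c @ v, c # u, w) i = completion \<tau> (v @ [c], u, w) i"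
  proof (cases "i \<ge> 0")
    case False
    then have "nat (- i) - 1 < length (left_word \<tau> (v @ [c]) u (nat (- i)))"
      using length_left_word_ge[OF assms, of "v @ [c]" "nat (- i)" u] by simp
    with False show ?thesis by (simp add: completion_def left_word_left_ext nth_append)
  qed (simp add: completion_def)
qed

abbreviation ext_step ::
  "('a \<Rightarrow> 'a list) \<Rightarrow> 'a list \<times> 'a list \<times> 'a list \<Rightarrow> 'a list \<times> 'a list \<times> 'a list \<Rightarrow> bool" where
  "ext_step \<tau> \<equiv> (\<lambda>g g'. left_ext \<tau> g g' \<or> right_ext \<tau> g g')"

lemma ext_steps_completion_shift:
  assumes "substitution \<tau>" "(ext_step \<tau>)\<^sup>*\<^sup>* g g'" "generator \<tau> g"
  shows "generator \<tau> g' \<and> (\<exists>n. \<forall>i. completion \<tau> g' i = completion \<tau> g (i + int n))"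
  using assms(2)
proof (induction rule: rtranclp_induct)
  case base
  show ?case using assms(3) by (intro conjI exI[of _ 0]) simp_all
next
  case (step g1 g2)
  then obtain n where gen1: "generator \<tau> g1"
    and shift: "\<forall>i. completion \<tau> g1 i = completion \<tau> g (i + int n)" by blast
  from step.hyps(2) show ?case
  proof
    assume "left_ext \<tau> g1 g2"
    then obtain v u c w where "g1 = (v @ [c], u, w)" "g2 = (\<tau> c @ v, c # u, w)"
      unfolding left_ext_def by blast
    then show ?case
      using gen1 shift generator_left_ext[OF assms(1)] completion_left_ext[OF assms(1)] by auto
  next
    assume "right_ext \<tau> g1 g2"
    then obtain v u c w where g12: "g1 = (v, u, c # w)" "g2 = (v, u @ [c], w @ \<tau> c)"
      unfolding right_ext_def by blast
    then have "v \<noteq> []" using gen1 by (simp add: generator_def)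
    then have "\<forall>i. completion \<tau> g2 i = completion \<tau> g (i + int (Suc n))"
      using g12 shift completion_right_ext[OF assms(1)] by (simp add: add.assoc)
    moreover have "generator \<tau> g2" using g12 gen1 generator_right_ext[OF assms(1)] by simp
    ultimately show ?case by blast
  qed
qed

lemma ext_steps_shift_completion:
  assumes "substitution \<tau>" "generator \<tau> g"
  shows "\<exists>g'. (ext_step \<tau>)\<^sup>*\<^sup>* g g' \<and> generator \<tau> g' \<and>
    (\<forall>i. completion \<tau> g' i = completion \<tau> g (i + int n))"
proof (induction n)
  case 0
  show ?case using assms(2) by (intro exI[of _ g]) simp
next
  case (Suc n)
  then obtain g' where steps: "(ext_step \<tau>)\<^sup>*\<^sup>* g g'" and gen: "generator \<tau> g'"
    and shift: "\<forall>i. completion \<tau> g' i = completion \<tau> g (i + int n)"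
    by blast
  obtain v u c w where g': "g' = (v, u, c # w)"
    using gen by (cases g') (auto simp: generator_def neq_Nil_conv)
  have "right_ext \<tau> g' (v, u @ [c], w @ \<tau> c)"
    using gen g' by (simp add: right_ext_def)
  moreover have "v \<noteq> []" using gen g' by (simp add: generator_def)
  ultimately show ?case
    using steps gen shift g' generator_right_ext[OF assms(1)] completion_right_ext[OF assms(1)]
    by (intro exI[of _ "(v, u @ [c], w @ \<tau> c)"])
      (auto simp: add.assoc intro: rtranclp.rtrancl_into_rtrancl)
qed

lemma ext_steps_lengthen_center:
  assumes "substitution \<tau>" "generator \<tau> (v, u, w)"
  shows "\<exists>v' u'. (ext_step \<tau>)\<^sup>*\<^sup>* (v, u, w) (v', u', w) \<and> generator \<tau> (v', u', w) \<and>
    length u' = length u + n \<and> completion \<tau> (v', u', w) = completion \<tau> (v, u, w)"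
proof (induction n)
  case 0
  show ?case using assms(2) by (intro exI[of _ v] exI[of _ u]) simp
next
  case (Suc n)
  then obtain v' u' where steps: "(ext_step \<tau>)\<^sup>*\<^sup>* (v, u, w) (v', u', w)"
    and gen: "generator \<tau> (v', u', w)" and len: "length u' = length u + n"
    and compl: "completion \<tau> (v', u', w) = completion \<tau> (v, u, w)"
    by blast
  obtain v'' c where v': "v' = v'' @ [c]"
    using gen by (cases v' rule: rev_cases) (auto simp: generator_def)
  have "left_ext \<tau> (v', u', w) (\<tau> c @ v'', c # u', w)"
    using gen v' by (auto simp: left_ext_def)
  then show ?case
    using steps gen len compl v' generator_left_ext[OF assms(1)] completion_left_ext[OF assms(1)]
    by (intro exI[of _ "\<tau> c @ v''"] exI[of _ "c # u'"])
      (auto intro: rtranclp.rtrancl_into_rtrancl)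
qed

lemma eventually_periodic_iterate:
  fixes R :: "nat \<Rightarrow> 'b"
  assumes "\<forall>i\<ge>B. R (i + d) = R i" "B \<le> i"
  shows "R (i + q * d) = R i"
proof (induction q)
  case (Suc q)
  have "R (i + Suc q * d) = R ((i + q * d) + d)" by (simp add: algebra_simps)
  also have "\<dots> = R (i + q * d)" using assms by simp
  finally show ?case using Suc by simp
qed simp

lemma periodic_mod:
  fixes z :: "int \<Rightarrow> 'b"
  assumes per: "\<And>i. z (i + d) = z i"
  shows "z i = z (i mod d)"
proof -
  have up: "z (j + int q * d) = z j" for j q
  proof (induction q)
    case (Suc q)
    have "z (j + int (Suc q) * d) = z ((j + int q * d) + d)" by (simp add: algebra_simps)
    with Suc per show ?case by simp
  qed simp
  show ?thesis
  proof (cases "i div d \<ge> 0")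
    case True
    then show ?thesis using up[of "i mod d" "nat (i div d)"] by (simp add: mult.commute)
  next
    case False
    then show ?thesis using up[of i "nat (- (i div d))"] by (simp add: minus_div_mult_eq_mod)
  qed
qed

lemma shift_space_window_occurs:
  fixes R :: "nat \<Rightarrow> 'a"
  assumes "z \<in> shift_space \<tau>"
    and occ: "\<forall>s\<in>language \<tau>. \<exists>p\<ge>B. \<forall>k<length s. R (p + k) = s ! k"
  shows "\<exists>p\<ge>B. \<forall>k\<le>n. z (i + int k) = R (p + k)"
proof -
  have "seg z i (i + int n) \<in> language \<tau>" using assms(1) by (simp add: shift_space_def)
  then obtain p where "p \<ge> B" "\<forall>k<Suc n. R (p + k) = seg z i (i + int n) ! k"
    using occ by (auto simp: seg_def)
  then show ?thesis by (auto simp: seg_def)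
qed

lemma finite_shift_space_if_language_in_eventually_periodic:
  fixes R :: "nat \<Rightarrow> 'a"
  assumes "d > 0" and per: "\<forall>i\<ge>B. R (i + d) = R i"
    and occ: "\<forall>s\<in>language \<tau>. \<exists>p\<ge>B. \<forall>k<length s. R (p + k) = s ! k"
  shows "finite (shift_space \<tau>)"
proof -
  (* Every point of the shift space is d-periodic, and its window [0, d] occurs in R at
    a position p \<ge> B, which may be replaced by B + (p - B) mod d. *)
  define F where "F = (\<lambda>q (i::int). R (B + q + nat (i mod int d)))"
  have "shift_space \<tau> \<subseteq> F ` {..<d}"
  proof
    fix z assume z: "z \<in> shift_space \<tau>"
    note occ_z = shift_space_window_occurs[OF z occ]
    have "z (i + int d) = z i" for i
    proof -
      obtain p where "p \<ge> B" "\<forall>k\<le>d. z (i + int k) = R (p + k)"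
        using occ_z by blast
      then show ?thesis using spec[of _ 0] spec[of _ d] per by auto
    qed
    then have z_mod: "z i = z (i mod int d)" for i by (rule periodic_mod)
    obtain p where p: "p \<ge> B" "\<forall>k\<le>d. z (int k) = R (p + k)"
      using occ_z[where i = 0 and n = d] by auto
    have p_reduce: "R (p + k) = R (B + (p - B) mod d + k)" for k
      using eventually_periodic_iterate[OF per, of "B + (p - B) mod d + k" "(p - B) div d"] p(1)
      by (simp add: algebra_simps)
    have "z = F ((p - B) mod d)"
    proof
      fix i
      define k where "k = nat (i mod int d)"
      have k: "int k = i mod int d" "k < d" using \<open>d > 0\<close> by (simp_all add: k_def nat_less_iff)
      then have "z i = R (p + k)" using z_mod[of i] p(2)[rule_format, of k] by simp
      then show "z i = F ((p - B) mod d) i" using p_reduce by (simp add: F_def k_def)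
    qed
    then show "z \<in> F ` {..<d}" using \<open>d > 0\<close> by simp
  qed
  then show ?thesis using finite_surj by blast
qed

lemma language_occurs_in_completion:
  assumes "substitution \<tau>" "primitive \<tau>" "generator \<tau> (v, u, w)" "s \<in> language \<tau>"
  shows "\<exists>p\<ge>length w. \<forall>k<length s. completion \<tau> (v, u, w) (int (p + k)) = s ! k"
proof -
  obtain a n where "n \<ge> 1" "is_factor s ((subst_word \<tau> ^^ n) [a])"
    using assms(4) unfolding language_def by blast
  then obtain s1 s2 where s: "(subst_word \<tau> ^^ n) [a] = s1 @ s @ s2"
    unfolding is_factor_def by blast
  obtain N where "\<forall>a b. b \<in> set ((subst_word \<tau> ^^ N) [a])"
    using assms(2) unfolding primitive_def by blast
  moreover obtain b w' where w: "w = b # w'"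
    using assms(3) by (cases w) (auto simp: generator_def)
  ultimately obtain P Q where PQ: "(subst_word \<tau> ^^ N) [b] = P @ a # Q"
    by (meson split_list)
  define M where "M = n + N"
  define X where "X = right_word \<tau> w M @ (subst_word \<tau> ^^ n) P @ s1"
  define Y where "Y = s2 @ (subst_word \<tau> ^^ n) Q @ (subst_word \<tau> ^^ M) w'"
  have "(subst_word \<tau> ^^ M) [b] = (subst_word \<tau> ^^ n) (P @ [a] @ Q)"
    by (simp add: M_def funpow_add PQ)
  then have right_word: "right_word \<tau> w (Suc M) = X @ s @ Y"
    using subst_word_power_append[of M \<tau> "[b]" w'] subst_word_power_append[of n \<tau> "[a]" Q]
    by (simp add: right_word_Suc w s X_def Y_def)
  obtain M' where "M = Suc M'" using \<open>n \<ge> 1\<close> M_def not0_implies_Suc by fastforce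
  then have "length w \<le> length X" by (simp add: X_def right_word_Suc_subst_word)
  moreover have "completion \<tau> (v, u, w) (int (length X + k)) = s ! k" if "k < length s" for k
    using completion_right_word_nth[OF assms(1), of w "length X + k" "Suc M" v u]
      right_word w that
    by (simp add: nth_append)
  ultimately show ?thesis by blast
qed

(* The right half r of the completion satisfies r = w \<tau>(r). *)
lemma completion_right_half_subst:
  assumes "substitution \<tau>" "generator \<tau> (v, u, w)" "j < K"
  shows "completion \<tau> (v, u, w) (int (length w + j)) =
    subst_word \<tau> (map (\<lambda>k. completion \<tau> (v, u, w) (int k)) [0..<K]) ! j"
proof -
  have "w \<noteq> []" using assms(2) by (simp add: generator_def)
  define r where "r = right_word \<tau> w K"
  define p where "p = map (\<lambda>k. completion \<tau> (v, u, w) (int k)) [0..<K]"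
  have "K \<le> length r" unfolding r_def by (rule length_right_word_ge[OF assms(1) \<open>w \<noteq> []\<close>])
  then have "p = take K r"
    using completion_right_word_nth[OF assms(1) \<open>w \<noteq> []\<close>, of _ K v u]
    by (intro nth_equalityI) (simp_all add: p_def r_def)
  then have "subst_word \<tau> r = subst_word \<tau> p @ subst_word \<tau> (drop K r)"
    by (simp flip: subst_word_append)
  then have "right_word \<tau> w (Suc K) = w @ subst_word \<tau> p @ subst_word \<tau> (drop K r)"
    using right_word_Suc_subst_word[of \<tau> w K] by (simp add: r_def)
  moreover have "K \<le> length (subst_word \<tau> p)"
    using length_subst_word_ge[OF assms(1), of p] by (simp add: p_def)
  ultimately show ?thesis
    using completion_right_word_nth[OF assms(1) \<open>w \<noteq> []\<close>, of "length w + j" "Suc K" v u] assms(3)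
    by (simp add: nth_append p_def)
qed

lemma finite_shift_space_if_right_wings_differ:
  assumes "substitution \<tau>" "primitive \<tau>"
    and gen1: "generator \<tau> (v1, u1, w1)" and gen2: "generator \<tau> (v2, u2, w2)"
    and same: "completion \<tau> (v1, u1, w1) = completion \<tau> (v2, u2, w2)"
    and "length w2 < length w1"
  shows "finite (shift_space \<tau>)"
proof -
  define R where "R = (\<lambda>j::nat. completion \<tau> (v2, u2, w2) (int j))"
  have shift: "R (length w1 + j) = R (length w2 + j)" for j
    using completion_right_half_subst[OF assms(1) gen1, of j "Suc j"]
      completion_right_half_subst[OF assms(1) gen2, of j "Suc j"]
    by (simp add: R_def same)
  have per: "\<forall>i\<ge>length w2. R (i + (length w1 - length w2)) = R i"
  proof (intro allI impI)
    fix i assume "length w2 \<le> i"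
    then show "R (i + (length w1 - length w2)) = R i"
      using shift[of "i - length w2"] \<open>length w2 < length w1\<close> by (simp add: add.commute)
  qed
  have occ: "\<forall>s\<in>language \<tau>. \<exists>p\<ge>length w2. \<forall>k<length s. R (p + k) = s ! k"
    unfolding R_def using language_occurs_in_completion[OF assms(1,2) gen2] by blast
  show ?thesis
    by (rule finite_shift_space_if_language_in_eventually_periodic[OF _ per occ])
      (use \<open>length w2 < length w1\<close> in simp)
qed

lemma generator_eq_if_same_completion:
  assumes "substitution \<tau>" "primitive \<tau>" "infinite (shift_space \<tau>)"
    and gen1: "generator \<tau> (v1, u1, w1)" and gen2: "generator \<tau> (v2, u2, w2)"
    and same: "completion \<tau> (v1, u1, w1) = completion \<tau> (v2, u2, w2)"
    and "length u1 = length u2"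
  shows "(v1, u1, w1) = (v2, u2, w2)"
proof -
  have "rev u1 = rev u2"
    using completion_center_nth[OF assms(1) gen1] completion_center_nth[OF assms(1) gen2]
      \<open>length u1 = length u2\<close> same
    by (intro nth_equalityI) auto
  moreover have "length w1 = length w2"
  proof (rule ccontr)
    assume "length w1 \<noteq> length w2"
    then have "finite (shift_space \<tau>)"
      using finite_shift_space_if_right_wings_differ[OF assms(1,2) gen1 gen2 same]
        finite_shift_space_if_right_wings_differ[OF assms(1,2) gen2 gen1 same[symmetric]]
      by (cases "length w2 < length w1") auto
    with assms(3) show False by contradiction
  qed
  then have "w1 = w2"
    using completion_right_wing_nth[OF assms(1) gen1] completion_right_wing_nth[OF assms(1) gen2]
      same
    by (intro nth_equalityI) auto
  moreover have "subst_word \<tau> u1 = v1 @ u1 @ w1" "subst_word \<tau> u2 = v2 @ u2 @ w2"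
    using gen1 gen2 by (auto simp: generator_def)
  ultimately show ?thesis by simp
qed

lemma G_related_if_same_completion:
  assumes "substitution \<tau>" "primitive \<tau>" "infinite (shift_space \<tau>)"
    and "generator \<tau> g1" "generator \<tau> g2"
    and same: "completion \<tau> g1 = completion \<tau> g2"
  shows "G_related \<tau> g1 g2"
proof -
  obtain v1 u1 w1 v2 u2 w2 where g: "g1 = (v1, u1, w1)" "g2 = (v2, u2, w2)"
    by (cases g1, cases g2) auto
  define L where "L = max (length u1) (length u2)"
  obtain v1' u1' where steps1: "(ext_step \<tau>)\<^sup>*\<^sup>* g1 (v1', u1', w1)"
    and gen1: "generator \<tau> (v1', u1', w1)" and "length u1' = L"
    and compl1: "completion \<tau> (v1', u1', w1) = completion \<tau> g1"
    using ext_steps_lengthen_center[OF assms(1) assms(4)[unfolded g(1)], of "L - length u1"]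
    by (auto simp: g L_def)
  obtain v2' u2' where steps2: "(ext_step \<tau>)\<^sup>*\<^sup>* g2 (v2', u2', w2)"
    and gen2: "generator \<tau> (v2', u2', w2)" and "length u2' = L"
    and compl2: "completion \<tau> (v2', u2', w2) = completion \<tau> g2"
    using ext_steps_lengthen_center[OF assms(1) assms(5)[unfolded g(2)], of "L - length u2"]
    by (auto simp: g L_def)
  have "(v1', u1', w1) = (v2', u2', w2)"
    using generator_eq_if_same_completion[OF assms(1-3) gen1 gen2] compl1 compl2 same
      \<open>length u1' = L\<close> \<open>length u2' = L\<close>
    by simp
  with steps1 steps2 show ?thesis
    unfolding G_related_def by (intro exI[of _ "(v2', u2', w2)"]) simp
qed

lemma G_related_sym: "G_related \<tau> g1 g2 \<Longrightarrow> G_related \<tau> g2 g1"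
  unfolding G_related_def by blast

lemma G_related_if_completion_shift:
  assumes "substitution \<tau>" "primitive \<tau>" "infinite (shift_space \<tau>)"
    and "generator \<tau> g1" "generator \<tau> g2"
    and shift: "\<forall>i. completion \<tau> g1 i = completion \<tau> g2 (i + int n)"
  shows "G_related \<tau> g1 g2"
proof -
  obtain g2' where steps: "(ext_step \<tau>)\<^sup>*\<^sup>* g2 g2'" and "generator \<tau> g2'"
    and "\<forall>i. completion \<tau> g2' i = completion \<tau> g2 (i + int n)"
    using ext_steps_shift_completion[OF assms(1,5)] by blast
  moreover from this shift have "completion \<tau> g1 = completion \<tau> g2'" by auto
  ultimately have "G_related \<tau> g1 g2'"
    using G_related_if_same_completion[OF assms(1-4)] by blast
  with steps show ?thesis
    unfolding G_related_def by (meson rtranclp_trans)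
qed

lemma orbit_equiv_if_G_related:
  assumes "substitution \<tau>" "generator \<tau> g1" "generator \<tau> g2" "G_related \<tau> g1 g2"
  shows "orbit_equiv (completion \<tau> g1) (completion \<tau> g2)"
proof -
  obtain g3 where steps1: "(ext_step \<tau>)\<^sup>*\<^sup>* g1 g3" and steps2: "(ext_step \<tau>)\<^sup>*\<^sup>* g2 g3"
    using assms(4) unfolding G_related_def by blast
  obtain n1 where n1: "\<forall>i. completion \<tau> g3 i = completion \<tau> g1 (i + int n1)"
    using ext_steps_completion_shift[OF assms(1) steps1 assms(2)] by blast
  obtain n2 where n2: "\<forall>i. completion \<tau> g3 i = completion \<tau> g2 (i + int n2)"
    using ext_steps_completion_shift[OF assms(1) steps2 assms(3)] by blast
  have "completion \<tau> g1 i = completion \<tau> g2 (i + (int n2 - int n1))" for i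
    using n1[rule_format, of "i - int n1"] n2[rule_format, of "i - int n1"]
    by (simp add: algebra_simps)
  then show ?thesis unfolding orbit_equiv_def by blast
qed

theorem mainTheorem5:
  fixes \<tau> :: "'a::finite \<Rightarrow> 'a list"
    and g1 g2 :: "'a list \<times> 'a list \<times> 'a list"
  assumes "substitution \<tau>"
    and "primitive \<tau>"
    and "aperiodic \<tau>"
    and "generator \<tau> g1"
    and "generator \<tau> g2"
  shows "orbit_equiv (completion \<tau> g1) (completion \<tau> g2) \<longleftrightarrow> G_related \<tau> g1 g2"
proof
  assume "G_related \<tau> g1 g2"
  then show "orbit_equiv (completion \<tau> g1) (completion \<tau> g2)"
    using orbit_equiv_if_G_related assms(1,4,5) by blast
next
  assume "orbit_equiv (completion \<tau> g1) (completion \<tau> g2)"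
  then obtain m where m: "\<forall>i. completion \<tau> g1 i = completion \<tau> g2 (i + m)"
    unfolding orbit_equiv_def by blast
  have inf: "infinite (shift_space \<tau>)" using assms(3) by (simp add: aperiodic_def)
  show "G_related \<tau> g1 g2"
  proof (cases "m \<ge> 0")
    case True
    with m have "\<forall>i. completion \<tau> g1 i = completion \<tau> g2 (i + int (nat m))" by simp
    then show ?thesis using G_related_if_completion_shift[OF assms(1,2) inf assms(4,5)] by blast
  next
    case False
    have "completion \<tau> g2 i = completion \<tau> g1 (i + int (nat (- m)))" for i
      using m[rule_format, of "i - m"] False by simp
    then show ?thesis
      using G_related_if_completion_shift[OF assms(1,2) inf assms(5,4)] G_related_sym by blast
  qed
qed

end
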